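(* Fix $\varepsilon\in(0,1)$, a positive sequence $\lambda_n\to0$, and a nonzero positive semidefinite $2\times2$ matrix $\mathbf{V}$. There exists a finite constant $h(\mathbf{V},\varepsilon)$ such that, for all sufficiently large $n$, $$\Psi^{-1}(\mathbf{V},\varepsilon+\lambda_n)\subset\Psi^{-1}(\mathbf{V},\varepsilon)+h(\mathbf{V},\varepsilon)\lambda_n\mathbf{1},$$ where $\mathbf{1}=(1,1)^T$ and $A+c\mathbf{1}:=\{\mathbf{a}+c\mathbf{1}:\mathbf{a}\in A\}$.
   Context: For a nonzero positive semidefinite $2\times2$ matrix $\mathbf{V}$ and $\varepsilon\in(0,1)$: $\Psi(z_1,z_2;\mathbf{V}):=\Pr(U_1\le z_1,U_2\le z_2)$ for $\mathbf{U}\sim\mathcal{N}(\mathbf{0},\mathbf{V})$, and $\Psi^{-1}(\mathbf{V},\varepsilon):=\{(z_1,z_2)\in\mathbb{R}^2:\Psi(-z_1,-z_2;\mathbf{V})\ge1-\varepsilon\}$. *)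

theory Defs
  imports "HOL-Probability.Probability"
begin

definition psd2 :: "real^2^2 \<Rightarrow> bool" where
  "psd2 V \<longleftrightarrow> transpose V = V \<and> (\<forall>x::real^2. 0 \<le> x \<bullet> (V *v x))"

definition std_normal2 :: "(real \<times> real) measure" where
  "std_normal2 = density lborel std_normal_density \<Otimes>\<^sub>M density lborel std_normal_density"

text \<open>A square-root factor A with A A^T = V (any choice; the law of A Z does not depend on it).\<close>
definition sqrt_factor :: "real^2^2 \<Rightarrow> real^2^2" where
  "sqrt_factor V = (SOME A. A ** transpose A = V)"

text \<open>The law of U ~ N(0,V), realised as U = A Z with Z standard bivariate normal, A A^T = V.\<close>
definition gauss2 :: "real^2^2 \<Rightarrow> (real \<times> real) measure" where
  "gauss2 V = (let A = sqrt_factor V in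
     distr std_normal2 borel
       (\<lambda>(z1, z2). (A$1$1 * z1 + A$1$2 * z2, A$2$1 * z1 + A$2$2 * z2)))"

definition Psi :: "real \<Rightarrow> real \<Rightarrow> real^2^2 \<Rightarrow> real" where
  "Psi z1 z2 V = measure (gauss2 V) {u. fst u \<le> z1 \<and> snd u \<le> z2}"

definition Psi_inv :: "real^2^2 \<Rightarrow> real \<Rightarrow> (real \<times> real) set" where
  "Psi_inv V \<epsilon> = {(z1, z2). Psi (- z1) (- z2) V \<ge> 1 - \<epsilon>}"

definition shift1 :: "(real \<times> real) set \<Rightarrow> real \<Rightarrow> (real \<times> real) set" where
  "shift1 A c = (\<lambda>(a1, a2). (a1 + c, a2 + c)) ` A"

end

theory Submission
  imports Defs
begin

(* Write Psi(z; V) = P(A Z <= z) with Z standard Gaussian in R^2 and A A^T = V.  Raising z by t(1,1)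
   adds the layer {z < A Z <= z + t(1,1)}, which has probability at least kappa t as long as Psi
   stays in [delta, 1 - eps]; so a point with Psi >= 1 - eps - lambda is moved into Psi^{-1}(V, eps)
   by the diagonal shift lambda / kappa.
   For the layer bound choose a box B = [-M, M]^2 so large that K = {A Z <= z} and its complement
   both keep mass eta inside B.  Either every vertical segment of B leaves K: then along each vertical
   line through K inside B the convex, L-Lipschitz function max_i ((A z)_i - z_i) passes from <= 0
   to > 0 within [-M, M], so it spends length t / L in (0, t] at places where the Gaussian density
   is at least phi(M + 1).  Or some vertical segment lies in K: then every horizontal line through
   B - K meets K inside B and the same argument applies horizontally.  Fubini gives the bound. *)

abbreviation std_normal :: "real measure" where
  "std_normal \<equiv> density lborel (\<lambda>x. ennreal (std_normal_density x))"

interpretation std_normal: prob_space std_normal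
  by (simp add: prob_space_normal_density)

lemma std_normal_density_le_abs:
  assumes "\<bar>y\<bar> \<le> m"
  shows "std_normal_density m \<le> std_normal_density y"
proof -
  have "y\<^sup>2 \<le> m\<^sup>2"
    using assms by (metis abs_le_square_iff abs_of_nonneg abs_ge_zero order_trans)
  then show ?thesis
    unfolding std_normal_density_def by (intro mult_left_mono) auto
qed

lemma measure_std_normal_interval_ge:
  assumes "-M \<le> e" "e + r \<le> M" "0 < r"
  shows "r * std_normal_density M \<le> measure std_normal {e<..<e+r}"
proof -
  have "ennreal (r * std_normal_density M) =
      (\<integral>\<^sup>+y. ennreal (std_normal_density M) * indicator {e<..<e+r} y \<partial>lborel)"
    using assms by (simp add: nn_integral_cmult_indicator ennreal_mult' mult.commute)
  also have "\<dots> \<le> (\<integral>\<^sup>+y. ennreal (std_normal_density y) * indicator {e<..<e+r} y \<partial>lborel)"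
    using assms
    by (intro nn_integral_mono) (auto simp: indicator_def intro!: std_normal_density_le_abs)
  also have "\<dots> = emeasure std_normal {e<..<e+r}"
    by (simp add: emeasure_density)
  finally show ?thesis
    by (simp add: std_normal.emeasure_eq_measure ennreal_le_iff)
qed

lemma finite_measure_real_tail_small:
  fixes \<mu> :: "real measure"
  assumes "finite_measure \<mu>" "sets \<mu> = sets borel" "0 < \<eta>"
  shows "\<exists>M>0. measure \<mu> {y. M < \<bar>y\<bar>} \<le> \<eta>"
proof -
  interpret finite_measure \<mu> by (rule assms(1))
  define tail where "tail n = {y::real. real n < \<bar>y\<bar>}" for n :: nat
  have tail_sets: "tail n \<in> sets \<mu>" for n
    unfolding assms(2) tail_def by measurable
  have "decseq tail"
    by (auto simp: decseq_def tail_def)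
  then have "(\<lambda>n. measure \<mu> (tail n)) \<longlonglongrightarrow> measure \<mu> (\<Inter>n. tail n)"
    using tail_sets by (intro finite_Lim_measure_decseq) auto
  moreover have "(\<Inter>n. tail n) = {}"
  proof (intro equals0I)
    fix y assume y: "y \<in> (\<Inter>n. tail n)"
    obtain n where "\<bar>y\<bar> < real n" using reals_Archimedean2 by blast
    moreover have "real n < \<bar>y\<bar>" using y by (auto simp: tail_def)
    ultimately show False by simp
  qed
  ultimately have "(\<lambda>n. measure \<mu> (tail n)) \<longlonglongrightarrow> 0"
    by simp
  then obtain n where n: "measure \<mu> (tail n) < \<eta>"
    using assms(3) order_tendstoD(2) by (metis eventually_sequentially order_refl)
  have "measure \<mu> (tail (Suc n)) \<le> measure \<mu> (tail n)"
    using tail_sets by (intro finite_measure_mono) (auto simp: tail_def)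
  with n have "measure \<mu> {y. real (Suc n) < \<bar>y\<bar>} \<le> \<eta>"
    unfolding tail_def by linarith
  then show ?thesis
    using of_nat_0_less_iff zero_less_Suc by blast
qed

lemma quasiconvex_exit_interval_right:
  fixes f :: "real \<Rightarrow> real"
  assumes quasiconvex: "\<And>u v z. u \<le> z \<Longrightarrow> z \<le> v \<Longrightarrow> f z \<le> max (f u) (f v)"
    and lipschitz: "\<And>u v. f u \<le> f v + L * \<bar>u - v\<bar>"
    and "0 \<le> L" "y0 < y1" "f y0 \<le> 0" "0 < f y1"
  shows "\<exists>e\<in>{y0..y1}. {e<..<e+r} \<subseteq> {y. 0 < f y \<and> f y \<le> L * r}"
proof -
  define S where "S = {y. f y \<le> 0}"
  have S_le: "y \<le> y1" if "y \<in> S" for y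
  proof (rule ccontr)
    assume "\<not> y \<le> y1"
    then have "f y1 \<le> max (f y0) (f y)"
      using quasiconvex \<open>y0 < y1\<close> by simp
    with that \<open>f y0 \<le> 0\<close> \<open>0 < f y1\<close> show False
      by (simp add: S_def)
  qed
  have "y0 \<in> S" using \<open>f y0 \<le> 0\<close> by (simp add: S_def)
  have bdd: "bdd_above S" using S_le by (rule bdd_aboveI)
  define e where "e = Sup S"
  have "y0 \<le> e" unfolding e_def using \<open>y0 \<in> S\<close> bdd by (rule cSup_upper)
  moreover have "e \<le> y1" unfolding e_def using \<open>y0 \<in> S\<close> S_le by (auto intro: cSup_least)
  moreover have "{e<..<e+r} \<subseteq> {y. 0 < f y \<and> f y \<le> L * r}"
  proof
    fix y assume y: "y \<in> {e<..<e+r}"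
    have "y \<notin> S" using y cSup_upper[OF _ bdd] by (force simp: e_def)
    moreover have "y - r < Sup S" using y by (simp add: e_def)
    then obtain s where s: "s \<in> S" "y - r < s"
      using less_cSup_iff[OF _ bdd] \<open>y0 \<in> S\<close> by blast
    moreover have "s \<le> e" unfolding e_def using s(1) bdd by (rule cSup_upper)
    ultimately have "0 < f y" "\<bar>y - s\<bar> \<le> r" "f s \<le> 0"
      using y by (auto simp: S_def)
    then show "y \<in> {y. 0 < f y \<and> f y \<le> L * r}"
      using lipschitz[of y s] mult_left_mono[OF \<open>\<bar>y - s\<bar> \<le> r\<close> \<open>0 \<le> L\<close>] by simp
  qed
  ultimately show ?thesis by auto
qed

lemma quasiconvex_exit_interval:
  fixes f :: "real \<Rightarrow> real"
  assumes quasiconvex: "\<And>u v z. u \<le> z \<Longrightarrow> z \<le> v \<Longrightarrow> f z \<le> max (f u) (f v)"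
    and lipschitz: "\<And>u v. f u \<le> f v + L * \<bar>u - v\<bar>"
    and "0 \<le> L" "0 \<le> r" "f y0 \<le> 0" "0 < f y1"
  shows "\<exists>e. min y0 y1 - r \<le> e \<and> e + r \<le> max y0 y1 + r \<and> {e<..<e+r} \<subseteq> {y. 0 < f y \<and> f y \<le> L * r}"
proof (cases "y0 < y1")
  case True
  then obtain e where "e \<in> {y0..y1}" "{e<..<e+r} \<subseteq> {y. 0 < f y \<and> f y \<le> L * r}"
    using quasiconvex_exit_interval_right[of f L y0 y1 r] assms by blast
  with True \<open>0 \<le> r\<close> show ?thesis
    by (intro exI[of _ e]) auto
next
  case False
  then have "- y0 < - y1"
    using assms(5,6) by (cases "y0 = y1") auto
  moreover have "(\<lambda>y. f (- y)) z \<le> max ((\<lambda>y. f (- y)) u) ((\<lambda>y. f (- y)) v)" if "u \<le> z" "z \<le> v" for u v z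
    using quasiconvex[of "- v" "- z" "- u"] that by (simp add: max.commute)
  moreover have "(\<lambda>y. f (- y)) u \<le> (\<lambda>y. f (- y)) v + L * \<bar>u - v\<bar>" for u v
    using lipschitz[of "- u" "- v"] by (simp add: abs_minus_commute)
  ultimately obtain e where e: "e \<in> {- y0..- y1}" "{e<..<e+r} \<subseteq> {y. 0 < f (- y) \<and> f (- y) \<le> L * r}"
    using quasiconvex_exit_interval_right[of "\<lambda>y. f (- y)" L "- y0" "- y1" r] assms(3,5,6) by auto
  have "{- e - r<..<- e - r + r} \<subseteq> {y. 0 < f y \<and> f y \<le> L * r}"
  proof
    fix y assume "y \<in> {- e - r<..<- e - r + r}"
    then have "- y \<in> {e<..<e+r}" by auto
    then show "y \<in> {y. 0 < f y \<and> f y \<le> L * r}" using e(2) by auto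
  qed
  with e(1) False \<open>0 \<le> r\<close> show ?thesis
    by (intro exI[of _ "- e - r"]) auto
qed

lemma measure_std_normal_layer_ge:
  fixes f :: "real \<Rightarrow> real"
  assumes quasiconvex: "\<And>u v z. u \<le> z \<Longrightarrow> z \<le> v \<Longrightarrow> f z \<le> max (f u) (f v)"
    and lipschitz: "\<And>u v. f u \<le> f v + L * \<bar>u - v\<bar>"
    and "f \<in> borel_measurable borel" "0 < t" "t \<le> L"
    and "\<bar>y_neg\<bar> \<le> M" "\<bar>y_pos\<bar> \<le> M" "f y_neg \<le> 0" "0 < f y_pos"
  shows "t / L * std_normal_density (M + 1) \<le> measure std_normal {y. 0 < f y \<and> f y \<le> t}"
proof -
  define r where "r = t / L"
  have r: "0 < r" "r \<le> 1" "L * r = t"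
    using assms(4,5) by (auto simp: r_def)
  then obtain e where e: "min y_neg y_pos - r \<le> e" "e + r \<le> max y_neg y_pos + r"
    and layer: "{e<..<e+r} \<subseteq> {y. 0 < f y \<and> f y \<le> t}"
    using quasiconvex_exit_interval[of f L r y_neg y_pos] quasiconvex lipschitz assms(4,5,8,9)
    by auto
  have "r * std_normal_density (M + 1) \<le> measure std_normal {e<..<e+r}"
    using e r assms(6,7) by (intro measure_std_normal_interval_ge) auto
  also have "\<dots> \<le> measure std_normal {y. 0 < f y \<and> f y \<le> t}"
    using layer assms(3) by (intro std_normal.finite_measure_mono) auto
  finally show ?thesis
    by (simp add: r_def)
qed

lemma affine_le_max_endpoints:
  fixes p k u v z :: real
  assumes "u \<le> z" "z \<le> v"
  shows "p * z + k \<le> max (p * u + k) (p * v + k)"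
proof (cases "0 \<le> p")
  case True
  then have "p * z \<le> p * v" using assms by (simp add: mult_left_mono)
  then show ?thesis by auto
next
  case False
  then have "p * z \<le> p * u" using assms by (simp add: mult_left_mono_neg)
  then show ?thesis by auto
qed

lemma affine_lipschitz:
  fixes p k u v L :: real
  assumes "\<bar>p\<bar> \<le> L"
  shows "p * u + k \<le> p * v + k + L * \<bar>u - v\<bar>"
proof -
  have "p * (u - v) \<le> \<bar>p\<bar> * \<bar>u - v\<bar>" by (metis abs_ge_self abs_mult)
  also have "\<dots> \<le> L * \<bar>u - v\<bar>" using assms by (simp add: mult_right_mono)
  finally show ?thesis by (simp add: algebra_simps)
qed

lemma measure_std_normal_max_affine_layer_ge:
  fixes p q k l :: real
  defines "g \<equiv> \<lambda>y. max (p * y + k) (q * y + l)"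
  assumes "\<bar>p\<bar> \<le> L" "\<bar>q\<bar> \<le> L" "0 < t" "t \<le> L"
    and "\<bar>y_neg\<bar> \<le> M" "\<bar>y_pos\<bar> \<le> M" "g y_neg \<le> 0" "0 < g y_pos"
  shows "t / L * std_normal_density (M + 1) \<le> measure std_normal {y. 0 < g y \<and> g y \<le> t}"
proof (rule measure_std_normal_layer_ge)
  show "g z \<le> max (g u) (g v)" if "u \<le> z" "z \<le> v" for u v z
    using affine_le_max_endpoints[OF that, of p k] affine_le_max_endpoints[OF that, of q l]
    by (auto simp: g_def)
  show "g u \<le> g v + L * \<bar>u - v\<bar>" for u v
    using affine_lipschitz[OF assms(2), of u k v] affine_lipschitz[OF assms(3), of u l v]
    by (auto simp: g_def)
  show "g \<in> borel_measurable borel"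
    unfolding g_def by measurable
qed (use assms in auto)

lemma (in prob_space) ennreal_mult_emeasure_le:
  assumes "0 \<le> k" "X \<noteq> {} \<Longrightarrow> k \<le> prob Y"
  shows "ennreal k * emeasure M X \<le> emeasure M Y"
proof (cases "X = {}")
  case False
  have "k * prob X \<le> prob Y"
    using assms False by (meson mult_left_le measure_nonneg prob_le_1 order_trans)
  then show ?thesis
    using assms(1) by (simp add: emeasure_eq_measure ennreal_mult'[symmetric] ennreal_leI)
qed simp

context pair_prob_space
begin

lemma measure_le_by_fst_fibres:
  assumes A: "A \<in> sets (M1 \<Otimes>\<^sub>M M2)" and D: "D \<in> sets (M1 \<Otimes>\<^sub>M M2)" and "0 \<le> k"
    and fibre: "\<And>x. Pair x -` A \<noteq> {} \<Longrightarrow> k \<le> measure M2 (Pair x -` D)"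
  shows "k * measure (M1 \<Otimes>\<^sub>M M2) A \<le> measure (M1 \<Otimes>\<^sub>M M2) D"
proof -
  have "ennreal k * emeasure (M1 \<Otimes>\<^sub>M M2) A = (\<integral>\<^sup>+x. ennreal k * emeasure M2 (Pair x -` A) \<partial>M1)"
    using A by (simp add: M2.emeasure_pair_measure_alt nn_integral_cmult measurable_emeasure_Pair1)
  also have "\<dots> \<le> (\<integral>\<^sup>+x. emeasure M2 (Pair x -` D) \<partial>M1)"
    using \<open>0 \<le> k\<close> fibre by (intro nn_integral_mono M2.ennreal_mult_emeasure_le)
  also have "\<dots> = emeasure (M1 \<Otimes>\<^sub>M M2) D"
    using D by (simp add: M2.emeasure_pair_measure_alt)
  finally show ?thesis
    using \<open>0 \<le> k\<close> by (simp add: emeasure_eq_measure ennreal_mult'[symmetric])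
qed

lemma measure_le_by_snd_fibres:
  assumes A: "A \<in> sets (M1 \<Otimes>\<^sub>M M2)" and D: "D \<in> sets (M1 \<Otimes>\<^sub>M M2)" and "0 \<le> k"
    and fibre: "\<And>y. (\<lambda>x. (x, y)) -` A \<noteq> {} \<Longrightarrow> k \<le> measure M1 ((\<lambda>x. (x, y)) -` D)"
  shows "k * measure (M1 \<Otimes>\<^sub>M M2) A \<le> measure (M1 \<Otimes>\<^sub>M M2) D"
proof -
  have "ennreal k * emeasure (M1 \<Otimes>\<^sub>M M2) A = (\<integral>\<^sup>+y. ennreal k * emeasure M1 ((\<lambda>x. (x, y)) -` A) \<partial>M2)"
    using A by (simp add: emeasure_pair_measure_alt2 nn_integral_cmult measurable_emeasure_Pair2)
  also have "\<dots> \<le> (\<integral>\<^sup>+y. emeasure M1 ((\<lambda>x. (x, y)) -` D) \<partial>M2)"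
    using \<open>0 \<le> k\<close> fibre by (intro nn_integral_mono M1.ennreal_mult_emeasure_le)
  also have "\<dots> = emeasure (M1 \<Otimes>\<^sub>M M2) D"
    using D by (simp add: emeasure_pair_measure_alt2)
  finally show ?thesis
    using \<open>0 \<le> k\<close> by (simp add: emeasure_eq_measure ennreal_mult'[symmetric])
qed

end

interpretation std_normal_pair: pair_prob_space std_normal std_normal
  by (simp add: pair_prob_space.intro pair_sigma_finite.intro std_normal.prob_space_axioms
      prob_space_imp_sigma_finite)

lemma std_normal2_eq_pair: "std_normal2 = std_normal \<Otimes>\<^sub>M std_normal"
  by (simp add: std_normal2_def)

interpretation std_normal2: prob_space std_normal2
  by (simp add: std_normal2_eq_pair std_normal_pair.prob_space_axioms)

lemma sets_std_normal2 [simp]: "sets std_normal2 = sets borel"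
  unfolding std_normal2_eq_pair
  by (metis borel_prod sets_pair_measure_cong sets_density sets_lborel)

lemma space_std_normal2 [simp]: "space std_normal2 = UNIV"
  by (simp add: std_normal2_eq_pair space_pair_measure)

lemma std_normal2_box_complement_small:
  assumes "0 < \<eta>"
  obtains M where "0 < M" "measure std_normal2 (UNIV - {-M..M} \<times> {-M..M}) \<le> \<eta>"
proof -
  obtain M where "0 < M" and tail: "measure std_normal {y. M < \<bar>y\<bar>} \<le> \<eta> / 2"
    using finite_measure_real_tail_small[of std_normal "\<eta> / 2"] assms
    by (auto simp: std_normal.finite_measure_axioms)
  define T where "T = {y::real. M < \<bar>y\<bar>}"
  have T: "T \<in> sets borel" unfolding T_def by measurable
  then have T2: "T \<times> UNIV \<in> sets std_normal2" "UNIV \<times> T \<in> sets std_normal2"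
    by (auto simp: std_normal2_eq_pair)
  have "measure std_normal2 (UNIV - {-M..M} \<times> {-M..M})
      \<le> measure std_normal2 (T \<times> UNIV \<union> UNIV \<times> T)"
    using T2 by (intro std_normal2.finite_measure_mono) (auto simp: T_def)
  also have "\<dots> \<le> measure std_normal2 (T \<times> UNIV) + measure std_normal2 (UNIV \<times> T)"
    using T2 by (intro measure_subadditive) (auto simp: std_normal2.emeasure_eq_measure)
  also have "\<dots> = measure std_normal T + measure std_normal T"
    using T by (simp add: std_normal2_eq_pair measure_def std_normal.emeasure_pair_measure_Times
        std_normal.emeasure_space_1[simplified])
  finally show ?thesis
    using that \<open>0 < M\<close> tail by (simp add: T_def)
qed

definition orthant_preimage :: "real \<Rightarrow> real \<Rightarrow> real \<Rightarrow> real \<Rightarrow> real \<Rightarrow> real \<Rightarrow> (real \<times> real) set" where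
  "orthant_preimage a b c d w1 w2 = {(x, y). a * x + b * y \<le> w1 \<and> c * x + d * y \<le> w2}"

lemma orthant_preimage_sets [measurable]: "orthant_preimage a b c d w1 w2 \<in> sets borel"
proof -
  have "closed {z :: real \<times> real. a * fst z + b * snd z \<le> w1 \<and> c * fst z + d * snd z \<le> w2}"
    by (intro closed_Collect_conj closed_Collect_le continuous_intros)
  moreover have "orthant_preimage a b c d w1 w2
      = {z. a * fst z + b * snd z \<le> w1 \<and> c * fst z + d * snd z \<le> w2}"
    by (auto simp: orthant_preimage_def)
  ultimately show ?thesis
    by (simp add: borel_closed)
qed

lemma orthant_preimage_mono:
  "w1 \<le> w1' \<Longrightarrow> w2 \<le> w2' \<Longrightarrow> orthant_preimage a b c d w1 w2 \<subseteq> orthant_preimage a b c d w1' w2'"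
  by (auto simp: orthant_preimage_def)

lemma orthant_preimage_swap:
  "(x, y) \<in> orthant_preimage a b c d w1 w2 \<longleftrightarrow> (y, x) \<in> orthant_preimage b a d c w1 w2"
  by (simp add: orthant_preimage_def add.commute)

lemma measure_std_normal_orthant_preimage_fibre_ge:
  fixes a b c d w1 w2 t L M :: real
  defines "K \<equiv> orthant_preimage a b c d w1 w2"
  assumes "\<bar>b\<bar> \<le> L" "\<bar>d\<bar> \<le> L" "0 < t" "t \<le> L"
    and "\<bar>y0\<bar> \<le> M" "(x, y0) \<in> K" "\<bar>y1\<bar> \<le> M" "(x, y1) \<notin> K"
  shows "t / L * std_normal_density (M + 1)
    \<le> measure std_normal (Pair x -` (orthant_preimage a b c d (w1 + t) (w2 + t) - K))"
proof -
  let ?g = "\<lambda>y. max (b * y + (a * x - w1)) (d * y + (c * x - w2))"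
  have "t / L * std_normal_density (M + 1) \<le> measure std_normal {y. 0 < ?g y \<and> ?g y \<le> t}"
    using assms by (intro measure_std_normal_max_affine_layer_ge[where y_neg = y0 and y_pos = y1])
      (auto simp: K_def orthant_preimage_def)
  also have "{y. 0 < ?g y \<and> ?g y \<le> t} = Pair x -` (orthant_preimage a b c d (w1 + t) (w2 + t) - K)"
    by (auto simp: K_def orthant_preimage_def)
  finally show ?thesis .
qed

lemma measure_orthant_preimage_layer_ge:
  fixes a b c d w1 w2 t L M :: real
  defines "K \<equiv> orthant_preimage a b c d w1 w2" and "B \<equiv> {-M..M} \<times> {-M..M}"
  assumes "\<bar>a\<bar> \<le> L" "\<bar>b\<bar> \<le> L" "\<bar>c\<bar> \<le> L" "\<bar>d\<bar> \<le> L" "0 < t" "t \<le> L"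
  shows "t / L * std_normal_density (M + 1) *
      min (measure std_normal2 (K \<inter> B)) (measure std_normal2 (B - K))
    \<le> measure std_normal2 (orthant_preimage a b c d (w1 + t) (w2 + t) - K)"
proof -
  define \<kappa> where "\<kappa> = t / L * std_normal_density (M + 1)"
  define D where "D = orthant_preimage a b c d (w1 + t) (w2 + t) - K"
  have "0 \<le> \<kappa>"
    using assms by (simp add: \<kappa>_def)
  have "B \<in> sets borel"
    by (simp add: B_def borel_closed closed_Times)
  then have sets: "K \<inter> B \<in> sets borel" "B - K \<in> sets borel" "D \<in> sets borel"
    by (auto simp: K_def D_def)
  have vertical: "\<kappa> \<le> measure std_normal (Pair x -` D)"
    if "\<bar>y0\<bar> \<le> M" "(x, y0) \<in> K" "\<bar>y1\<bar> \<le> M" "(x, y1) \<notin> K" for x y0 y1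
    unfolding \<kappa>_def D_def K_def using that assms
    by (intro measure_std_normal_orthant_preimage_fibre_ge) (auto simp: K_def)
  have horizontal: "\<kappa> \<le> measure std_normal ((\<lambda>x. (x, y)) -` D)"
    if "\<bar>x0\<bar> \<le> M" "(x0, y) \<in> K" "\<bar>x1\<bar> \<le> M" "(x1, y) \<notin> K" for y x0 x1
  proof -
    have "(\<lambda>x. (x, y)) -` D
        = Pair y -` (orthant_preimage b a d c (w1 + t) (w2 + t) - orthant_preimage b a d c w1 w2)"
      by (auto simp: D_def K_def orthant_preimage_swap)
    then show ?thesis
      unfolding \<kappa>_def using that assms
      by (simp only:) (intro measure_std_normal_orthant_preimage_fibre_ge;
          simp add: K_def orthant_preimage_swap[of _ y])
  qed
  consider (vertical_exits) "\<forall>x\<in>{-M..M}. \<exists>y\<in>{-M..M}. (x, y) \<notin> K"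
    | (vertical_inside) x0 where "x0 \<in> {-M..M}" "\<forall>y\<in>{-M..M}. (x0, y) \<in> K"
    by blast
  then have "\<kappa> * measure std_normal2 (K \<inter> B) \<le> measure std_normal2 D
      \<or> \<kappa> * measure std_normal2 (B - K) \<le> measure std_normal2 D"
  proof cases
    case vertical_exits
    have "\<kappa> * measure std_normal2 (K \<inter> B) \<le> measure std_normal2 D"
      using sets \<open>0 \<le> \<kappa>\<close>
    proof (intro std_normal_pair.measure_le_by_fst_fibres[folded std_normal2_eq_pair])
      fix x assume "Pair x -` (K \<inter> B) \<noteq> {}"
      then obtain y0 where "(x, y0) \<in> K" "x \<in> {-M..M}" "y0 \<in> {-M..M}"
        by (fastforce simp: B_def split: if_splits)
      with vertical_exits vertical show "\<kappa> \<le> measure std_normal (Pair x -` D)"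
        by (meson abs_le_iff atLeastAtMost_iff minus_le_iff)
    qed simp_all
    then show ?thesis ..
  next
    case vertical_inside
    have "\<kappa> * measure std_normal2 (B - K) \<le> measure std_normal2 D"
      using sets \<open>0 \<le> \<kappa>\<close>
    proof (intro std_normal_pair.measure_le_by_snd_fibres[folded std_normal2_eq_pair])
      fix y assume "(\<lambda>x. (x, y)) -` (B - K) \<noteq> {}"
      then obtain x1 where "(x1, y) \<notin> K" "x1 \<in> {-M..M}" "y \<in> {-M..M}"
        by (fastforce simp: B_def split: if_splits)
      with vertical_inside horizontal show "\<kappa> \<le> measure std_normal ((\<lambda>x. (x, y)) -` D)"
        by (meson abs_le_iff atLeastAtMost_iff minus_le_iff)
    qed simp_all
    then show ?thesis ..
  qed
  then show ?thesis
    using \<open>0 \<le> \<kappa>\<close> unfolding \<kappa>_def[symmetric] D_def[symmetric]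
    by (smt (verit) mult_left_mono min.cobounded1 min.cobounded2)
qed

lemma measure_orthant_preimage_diagonal_increase:
  fixes a b c d \<delta> \<epsilon> :: real
  assumes "0 < \<delta>" "0 < \<epsilon>"
  obtains \<kappa> L where "0 < \<kappa>" "0 < L"
    "\<And>w1 w2 t. 0 < t \<Longrightarrow> t \<le> L \<Longrightarrow>
      \<delta> \<le> measure std_normal2 (orthant_preimage a b c d w1 w2) \<Longrightarrow>
      measure std_normal2 (orthant_preimage a b c d w1 w2) \<le> 1 - \<epsilon> \<Longrightarrow>
      measure std_normal2 (orthant_preimage a b c d w1 w2) + \<kappa> * t
        \<le> measure std_normal2 (orthant_preimage a b c d (w1 + t) (w2 + t))"
proof -
  define \<eta> where "\<eta> = min \<delta> \<epsilon> / 2"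
  have "0 < \<eta>" using assms by (simp add: \<eta>_def)
  then obtain M where "0 < M" and box: "measure std_normal2 (UNIV - {-M..M} \<times> {-M..M}) \<le> \<eta>"
    by (rule std_normal2_box_complement_small)
  define B where "B = {-M..M} \<times> {-M..M}"
  have "B \<in> sets borel"
    by (simp add: B_def borel_closed closed_Times)
  have mass_in_box: "measure std_normal2 X - \<eta> \<le> measure std_normal2 (X \<inter> B)"
    if "X \<in> sets borel" for X
  proof -
    have "measure std_normal2 X - measure std_normal2 (X \<inter> B) = measure std_normal2 (X - B)"
      using that \<open>B \<in> sets borel\<close> by (simp add: std_normal2.finite_measure_Diff')
    also have "\<dots> \<le> measure std_normal2 (UNIV - B)"
      using that \<open>B \<in> sets borel\<close> by (intro std_normal2.finite_measure_mono) auto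
    finally show ?thesis
      using box by (simp add: B_def)
  qed
  define L where "L = \<bar>a\<bar> + \<bar>b\<bar> + \<bar>c\<bar> + \<bar>d\<bar> + 1"
  define \<kappa> where "\<kappa> = std_normal_density (M + 1) / L * \<eta>"
  have "0 < L" by (simp add: L_def)
  then have "0 < \<kappa>"
    using \<open>0 < \<eta>\<close> by (simp add: \<kappa>_def normal_density_pos)
  moreover have "measure std_normal2 (orthant_preimage a b c d w1 w2) + \<kappa> * t
      \<le> measure std_normal2 (orthant_preimage a b c d (w1 + t) (w2 + t))"
    if "0 < t" "t \<le> L" and lower: "\<delta> \<le> measure std_normal2 (orthant_preimage a b c d w1 w2)"
      and upper: "measure std_normal2 (orthant_preimage a b c d w1 w2) \<le> 1 - \<epsilon>" for w1 w2 t
  proof -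
    let ?K = "orthant_preimage a b c d w1 w2" and ?K' = "orthant_preimage a b c d (w1 + t) (w2 + t)"
    have "\<eta> \<le> measure std_normal2 (?K \<inter> B)"
      using mass_in_box[of ?K] lower by (simp add: \<eta>_def)
    moreover have "\<eta> \<le> measure std_normal2 (B - ?K)"
      using mass_in_box[of "UNIV - ?K"] upper std_normal2.prob_compl[of ?K]
      by (simp add: \<eta>_def Diff_eq Int_commute)
    ultimately have "\<eta> \<le> min (measure std_normal2 (?K \<inter> B)) (measure std_normal2 (B - ?K))"
      by simp
    moreover have "0 \<le> t / L * std_normal_density (M + 1)"
      using \<open>0 < t\<close> \<open>0 < L\<close> by (simp add: normal_density_nonneg)
    ultimately have "t / L * std_normal_density (M + 1) * \<eta> \<le> t / L * std_normal_density (M + 1) *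
        min (measure std_normal2 (?K \<inter> B)) (measure std_normal2 (B - ?K))"
      by (rule mult_left_mono)
    then have "\<kappa> * t \<le> t / L * std_normal_density (M + 1) *
        min (measure std_normal2 (?K \<inter> B)) (measure std_normal2 (B - ?K))"
      by (simp add: \<kappa>_def mult_ac)
    also have "\<dots> \<le> measure std_normal2 (?K' - ?K)"
      unfolding B_def using \<open>0 < t\<close> \<open>t \<le> L\<close>
      by (intro measure_orthant_preimage_layer_ge) (auto simp: L_def)
    also have "\<dots> = measure std_normal2 ?K' - measure std_normal2 ?K"
      using \<open>0 < t\<close> orthant_preimage_mono[of w1 "w1 + t" w2 "w2 + t" a b c d]
      by (simp add: std_normal2.finite_measure_Diff)
    finally show ?thesis
      by simp
  qed
  ultimately show thesis
    using \<open>0 < L\<close> that by blast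
qed

lemma Psi_eq_measure_orthant_preimage:
  "Psi z1 z2 V = measure std_normal2 (orthant_preimage (sqrt_factor V $ 1 $ 1) (sqrt_factor V $ 1 $ 2)
     (sqrt_factor V $ 2 $ 1) (sqrt_factor V $ 2 $ 2) z1 z2)"
proof -
  define A where "A = sqrt_factor V"
  define f where "f = (\<lambda>(x::real, y::real). (A $ 1 $ 1 * x + A $ 1 $ 2 * y, A $ 2 $ 1 * x + A $ 2 $ 2 * y))"
  have "f \<in> borel_measurable borel"
    unfolding f_def case_prod_beta by (intro borel_measurable_continuous_onI continuous_intros)
  then have f: "f \<in> measurable std_normal2 borel"
    using measurable_cong_sets[OF sets_std_normal2 refl] by blast
  have orthant: "{u :: real \<times> real. fst u \<le> z1 \<and> snd u \<le> z2} \<in> sets borel"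
    by (intro borel_closed closed_Collect_conj closed_Collect_le continuous_intros)
  have "Psi z1 z2 V = measure (distr std_normal2 borel f) {u. fst u \<le> z1 \<and> snd u \<le> z2}"
    unfolding Psi_def gauss2_def A_def f_def Let_def ..
  also have "\<dots> = measure std_normal2 (f -` {u. fst u \<le> z1 \<and> snd u \<le> z2} \<inter> space std_normal2)"
    by (rule measure_distr[OF f orthant])
  also have "f -` {u. fst u \<le> z1 \<and> snd u \<le> z2} \<inter> space std_normal2
      = orthant_preimage (A $ 1 $ 1) (A $ 1 $ 2) (A $ 2 $ 1) (A $ 2 $ 2) z1 z2"
    by (auto simp: f_def orthant_preimage_def)
  finally show ?thesis
    by (simp add: A_def)
qed

lemma Psi_diagonal_mono: "0 \<le> t \<Longrightarrow> Psi z1 z2 V \<le> Psi (z1 + t) (z2 + t) V"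
  unfolding Psi_eq_measure_orthant_preimage
  by (intro std_normal2.finite_measure_mono orthant_preimage_mono) auto

lemma Psi_diagonal_increase:
  assumes "0 < \<delta>" "0 < \<epsilon>"
  obtains \<kappa> L where "0 < \<kappa>" "0 < L"
    "\<And>z1 z2 t. 0 < t \<Longrightarrow> t \<le> L \<Longrightarrow> \<delta> \<le> Psi z1 z2 V \<Longrightarrow> Psi z1 z2 V \<le> 1 - \<epsilon> \<Longrightarrow>
      Psi z1 z2 V + \<kappa> * t \<le> Psi (z1 + t) (z2 + t) V"
  unfolding Psi_eq_measure_orthant_preimage
  by (rule measure_orthant_preimage_diagonal_increase[OF assms]) (blast intro: that)

lemma Psi_inv_subset_shift1:
  assumes increase: "\<And>z1 z2. \<delta> \<le> Psi z1 z2 V \<Longrightarrow> Psi z1 z2 V \<le> 1 - \<epsilon> \<Longrightarrow>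
      Psi z1 z2 V + s \<le> Psi (z1 + t) (z2 + t) V"
    and "0 \<le> t" "s \<le> 1 - \<epsilon> - \<delta>"
  shows "Psi_inv V (\<epsilon> + s) \<subseteq> shift1 (Psi_inv V \<epsilon>) t"
proof
  fix z assume "z \<in> Psi_inv V (\<epsilon> + s)"
  then obtain z1 z2 where z: "z = (z1, z2)" "1 - (\<epsilon> + s) \<le> Psi (- z1) (- z2) V"
    by (auto simp: Psi_inv_def)
  have "1 - \<epsilon> \<le> Psi (- z1 + t) (- z2 + t) V"
  proof (cases "Psi (- z1) (- z2) V \<le> 1 - \<epsilon>")
    case True
    then show ?thesis
      using increase[of "- z1" "- z2"] z(2) assms(3) by linarith
  next
    case False
    then show ?thesis
      using Psi_diagonal_mono[OF \<open>0 \<le> t\<close>, of "- z1" "- z2" V] by linarith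
  qed
  then have "(z1 - t, z2 - t) \<in> Psi_inv V \<epsilon>"
    by (simp add: Psi_inv_def)
  then show "z \<in> shift1 (Psi_inv V \<epsilon>) t"
    unfolding shift1_def z(1) by (rule rev_image_eqI) simp
qed

theorem lemma1:
  fixes V :: "real^2^2" and \<epsilon> :: real
  assumes "0 < \<epsilon>" "\<epsilon> < 1"
    and "psd2 V" "V \<noteq> 0"
  shows "\<exists>h::real. \<forall>lam::nat \<Rightarrow> real. (\<forall>n. 0 < lam n) \<and> lam \<longlonglongrightarrow> 0 \<longrightarrow>
           (\<forall>\<^sub>F n in sequentially. Psi_inv V (\<epsilon> + lam n) \<subseteq> shift1 (Psi_inv V \<epsilon>) (h * lam n))"
proof -
  obtain \<kappa> L where "0 < \<kappa>" "0 < L" and increase: "\<And>z1 z2 t. 0 < t \<Longrightarrow> t \<le> L \<Longrightarrow>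
      (1 - \<epsilon>) / 2 \<le> Psi z1 z2 V \<Longrightarrow> Psi z1 z2 V \<le> 1 - \<epsilon> \<Longrightarrow> Psi z1 z2 V + \<kappa> * t \<le> Psi (z1 + t) (z2 + t) V"
    using Psi_diagonal_increase[of "(1 - \<epsilon>) / 2" \<epsilon> V] assms(1,2) by auto
  have "\<forall>\<^sub>F n in sequentially. Psi_inv V (\<epsilon> + lam n) \<subseteq> shift1 (Psi_inv V \<epsilon>) (1 / \<kappa> * lam n)"
    if lam: "\<forall>n. 0 < lam n" "lam \<longlonglongrightarrow> 0" for lam :: "nat \<Rightarrow> real"
  proof -
    have "0 < min ((1 - \<epsilon>) / 2) (\<kappa> * L)"
      using assms(2) \<open>0 < \<kappa>\<close> \<open>0 < L\<close> by simp
    with lam(2) have "\<forall>\<^sub>F n in sequentially. lam n < min ((1 - \<epsilon>) / 2) (\<kappa> * L)"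
      by (rule order_tendstoD(2))
    then show ?thesis
    proof (rule eventually_mono)
      fix n assume small: "lam n < min ((1 - \<epsilon>) / 2) (\<kappa> * L)"
      have "0 < 1 / \<kappa> * lam n" "1 / \<kappa> * lam n \<le> L" "\<kappa> * (1 / \<kappa> * lam n) = lam n"
        using lam(1) small \<open>0 < \<kappa>\<close> by (auto simp: field_simps)
      moreover have "lam n \<le> 1 - \<epsilon> - (1 - \<epsilon>) / 2"
        using small by (simp add: field_simps)
      ultimately show "Psi_inv V (\<epsilon> + lam n) \<subseteq> shift1 (Psi_inv V \<epsilon>) (1 / \<kappa> * lam n)"
        using small increase[of "1 / \<kappa> * lam n"]
        by (intro Psi_inv_subset_shift1[where \<delta> = "(1 - \<epsilon>) / 2"]) auto
    qed
  qed
  then show ?thesis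
    by blast
qed

end
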